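(* Let $\mathcal{C}\subseteq\mathbb{F}_q^n$ be an MDS code with $|\mathcal{C}|=q^k\ge 2$ and minimum distance $d=n-k+1$. Then the minimum-distance graph $G(\mathcal{C})$ is connected.
   Context: $d(\cdot,\cdot)$ is Hamming distance. An $(n,M,d)_q$ code is MDS if $M=q^{n-d+1}$. The minimum-distance graph $G(\mathcal{C})$ has vertex set $\mathcal{C}$, with distinct $c_1,c_2$ adjacent iff $d(c_1,c_2)$ equals the minimum distance of $\mathcal{C}$. *)

theory Defs
  imports Main
begin

definition hamming :: "'a list \<Rightarrow> 'a list \<Rightarrow> nat" where
  "hamming x y = card {i. i < length x \<and> x ! i \<noteq> y ! i}"

definition min_dist :: "'a list set \<Rightarrow> nat" where
  "min_dist C = Min {hamming x y | x y. x \<in> C \<and> y \<in> C \<and> x \<noteq> y}"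

definition mds_code :: "nat \<Rightarrow> 'a list set \<Rightarrow> bool" where
  "mds_code n C \<longleftrightarrow> (\<forall>c\<in>C. length c = n) \<and>
     card C = card (UNIV :: 'a set) ^ (n - min_dist C + 1)"

definition md_edges :: "'a list set \<Rightarrow> ('a list \<times> 'a list) set" where
  "md_edges C = {(x, y). x \<in> C \<and> y \<in> C \<and> x \<noteq> y \<and> hamming x y = min_dist C}"

definition md_graph_connected :: "'a list set \<Rightarrow> bool" where
  "md_graph_connected C \<longleftrightarrow> (\<forall>x\<in>C. \<forall>y\<in>C. (x, y) \<in> (md_edges C)\<^sup>*)"

end

theory Submission
  imports Defs
begin

text \<open>Distinct codewords of an MDS code of dimension k agree in at most k - 1 positions, so
  every k coordinates of the code take every value in exactly one codeword.  Given distinct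
  x, y, enlarge the set of positions where they agree to a set S of size k - 1, pick a position
  j outside S where they differ, and take the codeword z that equals x on S and y at j.  Then
  d(x, z) \<le> n - (k - 1) forces x and z to be adjacent, while z agrees with y wherever x
  does and also at j, so d(z, y) < d(x, y); induction on the distance connects x to y.\<close>

definition agreements :: "'a list \<Rightarrow> 'a list \<Rightarrow> nat set" where
  "agreements x y = {i. i < length x \<and> x ! i = y ! i}"

lemma finite_agreements [simp]: "finite (agreements x y)"
  by (simp add: agreements_def)

lemma hamming_add_card_agreements: "hamming x y + card (agreements x y) = length x"
proof -
  have "{i. i < length x \<and> x ! i \<noteq> y ! i} \<union> agreements x y = {..<length x}"
    by (auto simp: agreements_def)
  moreover have "card ({i. i < length x \<and> x ! i \<noteq> y ! i} \<union> agreements x y) =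
      hamming x y + card (agreements x y)"
    unfolding hamming_def agreements_def by (rule card_Un_disjoint) auto
  ultimately show ?thesis by simp
qed

lemma min_dist_le_hamming:
  assumes "finite C" "x \<in> C" "y \<in> C" "x \<noteq> y"
  shows "min_dist C \<le> hamming x y"
proof -
  have "{hamming x y | x y. x \<in> C \<and> y \<in> C \<and> x \<noteq> y} \<subseteq> (\<lambda>(x, y). hamming x y) ` (C \<times> C)"
    by auto
  then have "finite {hamming x y | x y. x \<in> C \<and> y \<in> C \<and> x \<noteq> y}"
    using assms(1) by (meson finite_SigmaI finite_imageI finite_subset)
  then show ?thesis
    unfolding min_dist_def by (rule Min_le) (use assms in blast)
qed

lemma card_agreements_le:
  assumes "finite C" "x \<in> C" "y \<in> C" "x \<noteq> y"
  shows "card (agreements x y) \<le> length x - min_dist C"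
  using min_dist_le_hamming[OF assms] hamming_add_card_agreements[of x y] by linarith

lemma card_code_le:
  fixes C :: "'a::finite list set"
  assumes "\<forall>c\<in>C. length c = n"
  shows "card C \<le> card (UNIV :: 'a set) ^ n"
proof -
  have "card C \<le> card {xs. set xs \<subseteq> (UNIV :: 'a set) \<and> length xs = n}"
    by (rule card_mono[OF finite_lists_length_eq[OF finite_UNIV]]) (use assms in auto)
  then show ?thesis by (simp only: card_lists_length_eq[OF finite_UNIV])
qed

lemma codeword_with_prescribed_entries:
  fixes C :: "'a::finite list set"
  assumes len: "\<forall>c\<in>C. length c = n"
    and card_C: "card C = card (UNIV :: 'a set) ^ k"
    and few_agreements: "\<And>x y. x \<in> C \<Longrightarrow> y \<in> C \<Longrightarrow> x \<noteq> y \<Longrightarrow> card (agreements x y) < k"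
    and I: "I \<subseteq> {..<n}" "card I = k"
  obtains c where "c \<in> C" "\<forall>i\<in>I. c ! i = f i"
proof -
  define idx where "idx = sorted_list_of_set I"
  let ?proj = "\<lambda>c. map (nth c) idx"
  have fin_I: "finite I" using I(1) finite_subset by blast
  have set_idx: "set idx = I" and length_idx: "length idx = k"
    using fin_I I(2) by (simp_all add: idx_def)
  have inj: "inj_on ?proj C"
  proof (rule inj_onI, rule ccontr)
    fix x y assume xy: "x \<in> C" "y \<in> C" "?proj x = ?proj y" "x \<noteq> y"
    have "I \<subseteq> agreements x y"
      using xy(1,3) I(1) len set_idx by (auto simp: agreements_def)
    then have "k \<le> card (agreements x y)"
      using I(2) card_mono[OF finite_agreements] by metis
    then show False using few_agreements[OF xy(1,2,4)] by linarith
  qed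
  have "card (?proj ` C) = card {xs. set xs \<subseteq> (UNIV :: 'a set) \<and> length xs = k}"
    using card_image[OF inj] card_C unfolding card_lists_length_eq[OF finite_UNIV] by simp
  moreover have "?proj ` C \<subseteq> {xs. set xs \<subseteq> UNIV \<and> length xs = k}"
    using length_idx by auto
  ultimately have "?proj ` C = {xs. set xs \<subseteq> UNIV \<and> length xs = k}"
    by (intro card_subset_eq finite_lists_length_eq) simp_all
  then have "map f idx \<in> ?proj ` C"
    using length_idx by simp
  then obtain c where "c \<in> C" "map f idx = ?proj c" by blast
  moreover from this(2) have "\<forall>i\<in>I. c ! i = f i"
    unfolding map_eq_conv set_idx by simp
  ultimately show ?thesis using that by blast
qed

lemma mds_adjacent_step:
  fixes C :: "'a::finite list set"
  assumes len: "\<forall>c\<in>C. length c = n"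
    and card_C: "card C = card (UNIV :: 'a set) ^ k"
    and dist: "min_dist C = n - k + 1"
    and k: "1 \<le> k" "k \<le> n"
    and xy: "x \<in> C" "y \<in> C" "x \<noteq> y"
  obtains z where "z \<in> C" "(x, z) \<in> md_edges C" "hamming z y < hamming x y"
proof -
  have fin: "finite C" using card_C by (intro card_ge_0_finite) (simp add: finite_UNIV_card_ge_0)
  have lengths: "length x = n" "length y = n" using len xy by auto
  have few_agreements: "card (agreements u v) < k" if "u \<in> C" "v \<in> C" "u \<noteq> v" for u v
    using card_agreements_le[OF fin that] len that dist k by auto
  define A where "A = agreements x y"
  define D where "D = {i. i < n \<and> x ! i \<noteq> y ! i}"
  obtain j where j: "j \<in> D"
    using xy(3) lengths by (auto simp: D_def list_eq_iff_nth_eq)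
  have "card A \<le> k - 1" using few_agreements[OF xy] by (simp add: A_def)
  moreover have "A \<subseteq> {..<n} - {j}" using j lengths by (auto simp: A_def D_def agreements_def)
  moreover have "k - 1 \<le> card ({..<n} - {j})" using j k by (simp add: D_def)
  ultimately obtain S where S: "A \<subseteq> S" "S \<subseteq> {..<n} - {j}" "card S = k - 1"
    using exists_subset_between[of A "k - 1" "{..<n} - {j}"] by auto
  have fin_S: "finite S" using S(2) finite_subset by blast
  have "j \<notin> S" using S(2) by blast
  have I: "insert j S \<subseteq> {..<n}" "card (insert j S) = k"
    using S j k fin_S \<open>j \<notin> S\<close> by (auto simp: D_def)
  obtain z where z: "z \<in> C"
      and z_entries: "\<forall>i\<in>insert j S. z ! i = (if i = j then y ! j else x ! i)"
    by (rule codeword_with_prescribed_entries[OF len card_C few_agreements I])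
  have z_S: "z ! i = x ! i" if "i \<in> S" for i
    using z_entries that \<open>j \<notin> S\<close> by fastforce
  have z_j: "z ! j = y ! j" using z_entries by simp
  have "z \<noteq> x" using z_j j by (auto simp: D_def)
  have "{i. i < length x \<and> x ! i \<noteq> z ! i} \<subseteq> {..<n} - S"
    using z_S lengths by fastforce
  then have "hamming x z \<le> card ({..<n} - S)"
    unfolding hamming_def by (intro card_mono) auto
  also have "\<dots> = n - (k - 1)"
    using S(2,3) fin_S by (subst card_Diff_subset) auto
  finally have "hamming x z \<le> n - (k - 1)" .
  then have "hamming x z = min_dist C"
    using min_dist_le_hamming[OF fin xy(1) z \<open>z \<noteq> x\<close>[symmetric]] dist k by linarith
  then have "(x, z) \<in> md_edges C"
    using xy(1) z \<open>z \<noteq> x\<close> by (auto simp: md_edges_def)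
  moreover have "hamming z y < hamming x y"
  proof -
    have "{i. i < length z \<and> z ! i \<noteq> y ! i} \<subseteq> D - {j}"
      using z_S z_j S(1) len z lengths by (auto simp: A_def D_def agreements_def)
    then have "hamming z y \<le> card (D - {j})"
      unfolding hamming_def by (intro card_mono) (auto simp: D_def)
    also have "\<dots> < card D" using j by (intro card_Diff1_less) (auto simp: D_def)
    also have "\<dots> = hamming x y" using lengths by (simp add: hamming_def D_def)
    finally show ?thesis .
  qed
  ultimately show ?thesis using that z by blast
qed

lemma rtrancl_if_steps_decrease:
  fixes d :: "'a \<Rightarrow> 'a \<Rightarrow> nat"
  assumes step: "\<And>x y. x \<in> C \<Longrightarrow> y \<in> C \<Longrightarrow> x \<noteq> y \<Longrightarrow> \<exists>z\<in>C. (x, z) \<in> E \<and> d z y < d x y"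
    and "x \<in> C" "y \<in> C"
  shows "(x, y) \<in> E\<^sup>*"
  using assms(2)
proof (induction "d x y" arbitrary: x rule: less_induct)
  case less
  show ?case
  proof (cases "x = y")
    case False
    then obtain z where "z \<in> C" "(x, z) \<in> E" "d z y < d x y"
      using step less.prems assms(3) by blast
    then show ?thesis using less.hyps by (meson converse_rtrancl_into_rtrancl)
  qed simp
qed

theorem theorem9:
  fixes C :: "('a::{finite, field}) list set" and n k :: nat
  assumes "\<forall>c\<in>C. length c = n"
    and "mds_code n C"
    and "card C = card (UNIV :: 'a set) ^ k" and "card C \<ge> 2"
    and "min_dist C = n - k + 1"
  shows "md_graph_connected C"
proof -
  have "1 \<le> k" using assms(3,4) by (cases k) auto
  have "card (UNIV :: 'a set) \<noteq> 1" using assms(3,4) by auto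
  moreover have "0 < card (UNIV :: 'a set)" by (simp add: finite_UNIV_card_ge_0)
  ultimately have "1 < card (UNIV :: 'a set)" by linarith
  moreover have "card (UNIV :: 'a set) ^ k \<le> card (UNIV :: 'a set) ^ n"
    using card_code_le[OF assms(1)] assms(3) by simp
  ultimately have "k \<le> n" by (rule power_le_imp_le_exp)
  have step: "\<exists>z\<in>C. (x, z) \<in> md_edges C \<and> hamming z y < hamming x y"
    if "x \<in> C" "y \<in> C" "x \<noteq> y" for x y
    using mds_adjacent_step[OF assms(1,3,5) \<open>1 \<le> k\<close> \<open>k \<le> n\<close> that] by blast
  show ?thesis
    unfolding md_graph_connected_def
    using rtrancl_if_steps_decrease[where d = hamming, OF step] by blast
qed

end
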